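(* Let $J=(-\epsilon,\epsilon)$ and let $\Phi:\mathbb{R}^{n-1}\times J\to\mathbb{R}^n$, $\Phi(x;t)=(y_1(x;t),\dots,y_n(x;t))$, be an orientation-preserving $C^2$ diffeomorphism onto a domain $\Omega\subset\mathbb{R}^n$. For $t\in J$ let $\Gamma_t:\mathbb{R}^{n-1}\to\mathbb{R}^n$ be the parametrized hypersurface $x\mapsto\Phi(x;t)$. Let \[ \mathbf{n}=(-1)^{n-1}\det\begin{bmatrix}\mathbf{e}_1 & \frac{\partial y_1}{\partial x_1} & \cdots & \frac{\partial y_1}{\partial x_{n-1}}\\ \vdots & \vdots & & \vdots\\ \mathbf{e}_n & \frac{\partial y_n}{\partial x_1} & \cdots & \frac{\partial y_n}{\partial x_{n-1}}\end{bmatrix} \] (the Hodge dual of $\partial\Phi/\partial x_1\wedge\cdots\wedge\partial\Phi/\partial x_{n-1}$), and set $\varphi=\det d\Phi/\|\mathbf{n}\|$ and $\mathbf{N}=\mathbf{n}/\|\mathbf{n}\|$. Orient each $\Gamma_t$ by $\mathbf{N}$, and for $p\in\Omega$ let $H(p)$ be the mean curvature at $p$ of the oriented hypersurface $\Gamma_t$ containing $p$. Let $s$ be the arc-length parameter (modulo an additive constant) along the integral curves of $\mathbf{N}$. Then there exists a critical-point-free harmonic function $U$ on $\Omega$ whose family of level sets is $\{\Gamma_t\}_{t\in J}$ if and only if $\frac{\partial\varphi}{\partial s}+(n-1)H\varphi$ is constant on each $\Gamma_t$, i.e. \[ \frac{\partial}{\partial x_i}\left(\frac{\partial\varphi}{\partial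 s}+(n-1)H\varphi\right)=0\quad\text{for } i=1,\dots,n-1. \]
   Context: $\det d\Phi$ is the Jacobian determinant of $\Phi$. Quantities are transported between $\mathbb{R}^{n-1}\times J$ and $\Omega$ via $\Phi$: for $q\in\mathbb{R}^{n-1}\times J$, $(H\varphi)(q)=H(\Phi(q))\varphi(q)$ and $\frac{\partial\varphi}{\partial s}(q)=\frac{d}{ds}\big|_{s=0}\varphi(\Phi^{-1}(\alpha(s)))$ where $\alpha$ is the unit-speed integral curve of $\mathbf{N}$ with $\alpha(0)=\Phi(q)$. Mean curvature convention: at $p$ on a hypersurface oriented by unit normal $\mathbf{N}$, for a unit tangent $\mathbf{v}$ the normal section (intersection with the plane through $p$ spanned by $\mathbf{v},\mathbf{N}(p)$) has signed curvature $\kappa_p(\mathbf{v})=\langle c''(0),\mathbf{N}(p)\rangle$ for its unit-speed parametrization $c$ with $c(0)=p$, $c'(0)=\mathbf{v}$; $H(p)$ is the average of $\kappa_p(\mathbf{v})$ over unit tangent vectors $\mathbf{v}$ (i.e. $\frac1{n-1}$ times the sum of principal curvatures). *)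

theory Defs
  imports "HOL-Analysis.Analysis"
begin

text \<open>Euclidean n-space is modelled as real^('m option), with n - 1 = CARD('m).
  The parameter space R^(n-1) x J is (real^'m) x real restricted to UNIV x J.
  The coordinate x_i of R^(n-1) corresponds to the coordinate Some i of R^n and the
  parameter t to the coordinate None (which plays the role of the last coordinate y_n),
  which fixes the orientation conventions for det dPhi and for the normal n.\<close>

definition pd :: "('a::real_normed_vector \<Rightarrow> 'b::real_normed_vector) \<Rightarrow> 'a \<Rightarrow> 'a \<Rightarrow> 'b" where
  "pd f v q = frechet_derivative f (at q) v"

definition C2_on :: "'a::euclidean_space set \<Rightarrow> ('a \<Rightarrow> 'b::real_normed_vector) \<Rightarrow> bool" where
  "C2_on S f \<longleftrightarrow>
     (\<forall>x\<in>S. f differentiable (at x)) \<and>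
     (\<forall>b\<in>Basis. \<forall>x\<in>S. (pd f b) differentiable (at x)) \<and>
     (\<forall>b\<in>Basis. \<forall>c\<in>Basis. continuous_on S (pd (pd f b) c))"

definition harmonic_on :: "'a::euclidean_space set \<Rightarrow> ('a \<Rightarrow> real) \<Rightarrow> bool" where
  "harmonic_on S U \<longleftrightarrow> C2_on S U \<and> (\<forall>p\<in>S. (\<Sum>b\<in>Basis. pd (pd U b) b p) = 0)"

definition level_sets :: "'a set \<Rightarrow> ('a \<Rightarrow> real) \<Rightarrow> 'a set set" where
  "level_sets S U = {{p\<in>S. U p = c} | c. c \<in> U ` S}"

type_synonym 'm param = "(real^'m) \<times> real"
type_synonym 'm space = "real^('m option)"

definition dx :: "('m::finite param \<Rightarrow> 'm space) \<Rightarrow> 'm \<Rightarrow> 'm param \<Rightarrow> 'm space" where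
  "dx Phi i q = pd Phi (axis i 1, 0) q"

definition dt :: "('m::finite param \<Rightarrow> 'm space) \<Rightarrow> 'm param \<Rightarrow> 'm space" where
  "dt Phi q = pd Phi (0, 1) q"

definition jac_mat :: "('m::finite param \<Rightarrow> 'm space) \<Rightarrow> 'm param \<Rightarrow> real^('m option)^('m option)" where
  "jac_mat Phi q = (\<chi> r c. case c of None \<Rightarrow> dt Phi q $ r | Some i \<Rightarrow> dx Phi i q $ r)"

definition jac_det :: "('m::finite param \<Rightarrow> 'm space) \<Rightarrow> 'm param \<Rightarrow> real" where
  "jac_det Phi q = det (jac_mat Phi q)"

text \<open>The normal n = (-1)^(n-1) det [e | dPhi/dx_1 ... dPhi/dx_(n-1)]
   = det [dPhi/dx_1 ... dPhi/dx_(n-1) | e], i.e. its k-th component is the determinant with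
   the unit vector e_k in the last (None) column.\<close>
definition nvec :: "('m::finite param \<Rightarrow> 'm space) \<Rightarrow> 'm param \<Rightarrow> 'm space" where
  "nvec Phi q = (\<chi> k. det (\<chi> r c. case c of None \<Rightarrow> (if r = k then 1 else 0)
                                          | Some i \<Rightarrow> dx Phi i q $ r))"

definition Nvec :: "('m::finite param \<Rightarrow> 'm space) \<Rightarrow> 'm param \<Rightarrow> 'm space" where
  "Nvec Phi q = nvec Phi q /\<^sub>R norm (nvec Phi q)"

definition phi :: "('m::finite param \<Rightarrow> 'm space) \<Rightarrow> 'm param \<Rightarrow> real" where
  "phi Phi q = jac_det Phi q / norm (nvec Phi q)"

definition first_ff :: "('m::finite param \<Rightarrow> 'm space) \<Rightarrow> 'm param \<Rightarrow> real^'m^'m" where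
  "first_ff Phi q = (\<chi> i j. dx Phi i q \<bullet> dx Phi j q)"

definition second_ff :: "('m::finite param \<Rightarrow> 'm space) \<Rightarrow> 'm param \<Rightarrow> real^'m^'m" where
  "second_ff Phi q = (\<chi> i j. pd (dx Phi j) (axis i 1, 0) q \<bullet> Nvec Phi q)"

definition Hcurv :: "('m::finite param \<Rightarrow> 'm space) \<Rightarrow> 'm param \<Rightarrow> real" where
  "Hcurv Phi q = trace (matrix_inv (first_ff Phi q) ** second_ff Phi q) / real CARD('m)"

text \<open>Derivative of phi with respect to arc length along the integral curves of N,
  phi being transported to Omega = Phi ` D via the inverse of Phi on D:
  the directional derivative of phi o Phi^(-1) at Phi q in direction N(Phi q).\<close>
definition ds_phi :: "'m::finite param set \<Rightarrow> ('m param \<Rightarrow> 'm space) \<Rightarrow> 'm param \<Rightarrow> real" where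
  "ds_phi D Phi q = pd (\<lambda>p. phi Phi (inv_into D Phi p)) (Nvec Phi q) (Phi q)"

end

theory Submission
  imports Defs
begin

text \<open>Let \<open>\<tau>\<close> be the \<open>t\<close>-coordinate of \<open>\<Phi>\<^sup>-\<^sup>1\<close>: the \<open>\<Gamma>\<^sub>t\<close> are the level sets of \<open>\<tau>\<close>, so every
  function with these level sets is of the form \<open>f \<circ> \<tau>\<close>. The vector \<open>n\<close> is orthogonal to the
  \<open>\<partial>\<Phi>/\<partial>x\<^sub>i\<close> and has inner product \<open>det d\<Phi>\<close> with \<open>\<partial>\<Phi>/\<partial>t\<close>, hence \<open>n = det d\<Phi> \<nabla>\<tau>\<close>,
  \<open>N = \<nabla>\<tau>/|\<nabla>\<tau>|\<close> and \<open>\<phi> = 1/|\<nabla>\<tau>|\<close>. Splitting \<open>\<Delta>\<tau> = div \<nabla>\<tau>\<close> into the tangential part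
  \<open>|\<nabla>\<tau>| div N = -(n-1) H |\<nabla>\<tau>|\<close> and the normal part \<open>\<langle>D\<nabla>\<tau> N, N\<rangle> = -|\<nabla>\<tau>|\<^sup>2 \<partial>\<phi>/\<partial>s\<close> gives
  \<open>\<Delta>\<tau> = -|\<nabla>\<tau>|\<^sup>2 G\<close> with \<open>G = \<partial>\<phi>/\<partial>s + (n-1) H \<phi>\<close>, and therefore
  \<open>\<Delta>(f \<circ> \<tau>) = |\<nabla>\<tau>|\<^sup>2 (f'' - f' G) \<circ> \<tau>\<close>. For a harmonic \<open>f \<circ> \<tau>\<close> without critical points this
  forces \<open>G = f''/f'\<close>, which depends on \<open>t\<close> only; conversely, if \<open>G = g(t)\<close>, any \<open>f\<close> with
  \<open>f' = exp (\<integral>g)\<close> is strictly increasing and makes \<open>f \<circ> \<tau>\<close> harmonic.\<close>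

lemma linear_Basis_expansion:
  fixes f :: "'a::euclidean_space \<Rightarrow> 'b::real_vector"
  assumes "linear f"
  shows "f v = (\<Sum>b\<in>Basis. (v \<bullet> b) *\<^sub>R f b)"
proof -
  have "f v = f (\<Sum>b\<in>Basis. (v \<bullet> b) *\<^sub>R b)" by (simp add: euclidean_representation)
  then show ?thesis using assms by (simp add: linear_sum linear_scale)
qed

lemma trace_linear_comp_commute:
  fixes L :: "'a::euclidean_space \<Rightarrow> 'b::euclidean_space" and M :: "'b \<Rightarrow> 'a"
  assumes "linear L" "linear M"
  shows "(\<Sum>b\<in>Basis. M (L b) \<bullet> b) = (\<Sum>k\<in>Basis. L (M k) \<bullet> k)"
proof -
  have "(\<Sum>b\<in>Basis. M (L b) \<bullet> b) = (\<Sum>b\<in>Basis. \<Sum>k\<in>Basis. (L b \<bullet> k) * (M k \<bullet> b))"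
    by (subst linear_Basis_expansion[OF assms(2)]) (simp add: inner_sum_left)
  also have "\<dots> = (\<Sum>k\<in>Basis. \<Sum>b\<in>Basis. (L b \<bullet> k) * (M k \<bullet> b))"
    by (rule sum.swap)
  also have "\<dots> = (\<Sum>k\<in>Basis. L (M k) \<bullet> k)"
    by (subst (2) linear_Basis_expansion[OF assms(1)]) (simp add: inner_sum_left mult.commute)
  finally show ?thesis .
qed

lemma trace_linear_split:
  fixes f :: "'a::euclidean_space \<Rightarrow> 'a"
  assumes "linear f"
  shows "(\<Sum>b\<in>Basis. f b \<bullet> b) = (\<Sum>b\<in>Basis. (f b - (f b \<bullet> u) *\<^sub>R u) \<bullet> b) + f u \<bullet> u"
proof -
  have "f u \<bullet> u = (\<Sum>b\<in>Basis. (f b \<bullet> u) * (u \<bullet> b))"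
    by (subst linear_Basis_expansion[OF assms]) (simp add: inner_sum_left mult.commute)
  then show ?thesis by (simp add: inner_diff_left sum_subtractf)
qed

lemma sum_Basis_vec_axis:
  fixes F :: "real^'n::finite \<Rightarrow> 'b::comm_monoid_add"
  shows "(\<Sum>b\<in>Basis. F b) = (\<Sum>i\<in>UNIV. F (axis i 1))"
proof -
  have "Basis = range (\<lambda>i::'n. axis i (1::real))" by (auto simp: Basis_vec_def)
  moreover have "inj (\<lambda>i::'n. axis i (1::real))" by (auto intro!: injI simp: axis_eq_axis)
  ultimately show ?thesis by (metis (no_types, lifting) sum.reindex_cong)
qed

lemma sum_Basis_vec_real_prod:
  fixes F :: "(real^'n::finite) \<times> real \<Rightarrow> 'b::comm_monoid_add"
  shows "(\<Sum>k\<in>Basis. F k) = (\<Sum>i\<in>UNIV. F (axis i 1, 0)) + F (0, 1)"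
proof -
  have "inj_on (\<lambda>u. (u::real^'n, 0::real)) Basis" "inj_on (\<lambda>u. (0::real^'n, u::real)) Basis"
    by (auto intro!: inj_onI)
  then have "(\<Sum>k\<in>Basis. F k) = (\<Sum>u\<in>Basis. F (u, 0)) + (\<Sum>v\<in>Basis. F (0, v))"
    unfolding Basis_prod_def by (subst sum.union_disjoint) (auto simp: sum.reindex)
  then show ?thesis by (simp add: sum_Basis_vec_axis[of "\<lambda>u. F (u, 0)"])
qed

lemma Basis_vec_real_prod_cases:
  assumes "k \<in> (Basis :: ((real^'n::finite) \<times> real) set)"
  obtains i where "k = (axis i 1, 0)" | "k = (0, 1)"
  using assms by (auto simp: Basis_prod_def Basis_vec_def)

lemma axis_real_prod_in_Basis: "(axis i 1, 0) \<in> (Basis :: ((real^'n::finite) \<times> real) set)"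
  by (auto simp: Basis_prod_def Basis_vec_def)

lemma det_column_expansion:
  fixes C :: "'n::finite \<Rightarrow> real^'n" and v :: "real^'n"
  shows "det (\<chi> r c. if c = k then v$r else C c $ r) =
    (\<Sum>j\<in>UNIV. v$j * det (\<chi> r c. if c = k then (if r = j then 1 else 0) else C c $ r))"
proof -
  have transp: "det ((\<chi> r c. if c = k then w$r else C c $ r) :: real^'n^'n)
      = det (\<chi> c. if c = k then w else C c)" for w :: "real^'n"
  proof -
    let ?X = "(\<chi> r c. if c = k then w$r else C c $ r) :: real^'n^'n"
    have e: "transpose ?X = (\<chi> c. if c = k then w else C c)"
      by (simp add: transpose_def vec_eq_iff)
    have "det ?X = det (transpose ?X)" by (rule det_transpose[symmetric])
    also have "\<dots> = det (\<chi> c. if c = k then w else C c)" by (simp only: e)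
    finally show ?thesis .
  qed
  have "det (\<chi> c. if c = k then v else C c)
      = det (\<chi> c. if c = k then (\<Sum>j\<in>UNIV. v$j *s axis j 1) else C c)"
    by (simp only: basis_expansion)
  also have "\<dots> = (\<Sum>j\<in>UNIV. det (\<chi> c. if c = k then v$j *s axis j 1 else C c))"
    by (rule det_linear_row_sum) simp
  also have "\<dots> = (\<Sum>j\<in>UNIV. v$j * det (\<chi> c. if c = k then axis j 1 else C c))"
    by (simp only: det_row_mul)
  also have "\<dots> = (\<Sum>j\<in>UNIV. v$j * det (\<chi> r c. if c = k then (axis j 1 :: real^'n)$r else C c $ r))"
    by (simp only: transp vec_lambda_eta)
  also have "\<dots> = (\<Sum>j\<in>UNIV. v$j * det (\<chi> r c. if c = k then (if r = j then 1 else 0) else C c $ r))"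
  proof -
    have "((\<chi> r c. if c = k then (axis j 1 :: real^'n)$r else C c $ r) :: real^'n^'n)
        = (\<chi> r c. if c = k then (if r = j then 1 else 0) else C c $ r)" for j
      by (simp add: vec_eq_iff axis_def)
    then show ?thesis by simp
  qed
  finally show ?thesis using transp[of v] by simp
qed

lemma matrix_inv_right:
  fixes M :: "real^'n::finite^'n"
  assumes "invertible M"
  shows "M ** matrix_inv M = mat 1"
proof -
  have "\<exists>M'. M ** M' = mat 1 \<and> M' ** M = mat 1" using assms by (simp add: invertible_def)
  then have "M ** matrix_inv M = mat 1 \<and> matrix_inv M ** M = mat 1"
    unfolding matrix_inv_def by (rule someI_ex)
  then show ?thesis ..
qed

lemma has_derivative_pd: "f differentiable (at x) \<Longrightarrow> (f has_derivative (\<lambda>v. pd f v x)) (at x)"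
  using frechet_derivative_works[of f "at x"] unfolding pd_def by simp

lemma pd_eq: "(f has_derivative f') (at x) \<Longrightarrow> pd f v x = f' v"
  using frechet_derivative_at[of f f' x] unfolding pd_def by simp

lemma pd_Basis_expansion:
  fixes f :: "'a::euclidean_space \<Rightarrow> real"
  assumes "f differentiable (at x)"
  shows "pd f v x = (\<Sum>b\<in>Basis. (v \<bullet> b) * pd f b x)"
  using linear_Basis_expansion[OF has_derivative_linear[OF has_derivative_pd[OF assms]], of v]
  by (simp only: real_scaleR_def)

lemma has_derivative_eq_0_if_constant_on:
  assumes "(f has_derivative f') (at x)" "open S" "x \<in> S" "\<And>y. y \<in> S \<Longrightarrow> f y = c"
  shows "f' = (\<lambda>_. 0)"
proof -
  have "((\<lambda>_. c) has_derivative (\<lambda>_. 0)) (at x)" by simp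
  then have "(f has_derivative (\<lambda>_. 0)) (at x)"
    by (rule has_derivative_transform_within_open[OF _ assms(2,3)]) (use assms(4) in auto)
  then show ?thesis using assms(1) has_derivative_unique by blast
qed

lemma has_derivative_inverse_norm:
  fixes V :: "'a::real_normed_vector \<Rightarrow> 'b::real_inner"
  assumes V': "(V has_derivative V') (at p)" and "V p \<noteq> 0"
  shows "((\<lambda>p. 1 / norm (V p)) has_derivative (\<lambda>c. - (V' c \<bullet> sgn (V p)) / (norm (V p))\<^sup>2)) (at p)"
proof -
  have "((\<lambda>p. norm (V p)) has_derivative (\<lambda>c. V' c \<bullet> sgn (V p))) (at p)"
    using has_derivative_compose[OF V' has_derivative_norm[OF \<open>V p \<noteq> 0\<close>]] by simp
  from Deriv.has_derivative_inverse[OF _ this] \<open>V p \<noteq> 0\<close> show ?thesis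
    by (simp add: divide_inverse power2_eq_square mult.commute mult.left_commute)
qed

lemma has_derivative_sgn:
  fixes V :: "'a::real_normed_vector \<Rightarrow> 'b::real_inner"
  assumes V': "(V has_derivative V') (at p)" and "V p \<noteq> 0"
  shows "((\<lambda>p. sgn (V p)) has_derivative
           (\<lambda>c. (V' c - (V' c \<bullet> sgn (V p)) *\<^sub>R sgn (V p)) /\<^sub>R norm (V p))) (at p)"
proof -
  have "((\<lambda>p. (1 / norm (V p)) *\<^sub>R V p) has_derivative
      (\<lambda>c. (1 / norm (V p)) *\<^sub>R V' c + (- (V' c \<bullet> sgn (V p)) / (norm (V p))\<^sup>2) *\<^sub>R V p)) (at p)"
    by (rule has_derivative_scaleR[OF has_derivative_inverse_norm[OF assms] V'])
  then show ?thesis using \<open>V p \<noteq> 0\<close>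
    by (simp add: sgn_div_norm divide_inverse_commute algebra_simps power2_eq_square scaleR_diff_right)
qed

lemma DERIV_pos_imp_inj_on_interval:
  fixes f :: "real \<Rightarrow> real"
  assumes "\<And>t. a < t \<Longrightarrow> t < b \<Longrightarrow> \<exists>y. DERIV f t :> y \<and> y > 0"
  shows "inj_on f {a<..<b}"
proof -
  have "f s < f t" if "s \<in> {a<..<b}" "t \<in> {a<..<b}" "s < t" for s t
    by (rule DERIV_pos_imp_increasing[OF that(3)]) (use that assms in auto)
  then show ?thesis by (intro inj_onI) (metis linorder_cases order_less_irrefl)
qed

lemma open_interval_antiderivative:
  fixes g :: "real \<Rightarrow> real"
  assumes "a < b" "continuous_on {a<..<b} g"
  obtains f where "\<And>t. t \<in> {a<..<b} \<Longrightarrow> (f has_real_derivative g t) (at t)"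
proof -
  have "isCont g t" if "a < t" "t < b" for t
    using assms(2) that continuous_on_interior[of "{a<..<b}" g t] by simp
  then obtain f where f: "\<forall>t. ereal a < t \<longrightarrow> t < ereal b \<longrightarrow> (f has_vector_derivative g t) (at t)"
    using einterval_antiderivative[of "ereal a" "ereal b" g] assms(1) by auto
  have "(f has_real_derivative g t) (at t)" if "t \<in> {a<..<b}" for t
    using f that by (simp add: has_real_derivative_iff_has_vector_derivative)
  then show ?thesis by (rule that)
qed

locale foliation_chart =
  fixes Phi :: "(real^'m::finite) \<times> real \<Rightarrow> real^('m option)" and eps :: real
  assumes eps_pos: "eps > 0"
    and C2_Phi: "C2_on (UNIV \<times> {-eps<..<eps}) Phi"
    and inj_Phi: "inj_on Phi (UNIV \<times> {-eps<..<eps})"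
    and open_image: "open (Phi ` (UNIV \<times> {-eps<..<eps}))"
    and C2_Psi: "C2_on (Phi ` (UNIV \<times> {-eps<..<eps})) (inv_into (UNIV \<times> {-eps<..<eps}) Phi)"
    and jac_det_pos: "\<And>q. q \<in> UNIV \<times> {-eps<..<eps} \<Longrightarrow> jac_det Phi q > 0"
begin

abbreviation "J \<equiv> {-eps<..<eps}"
abbreviation "D \<equiv> (UNIV :: (real^'m) set) \<times> J"
abbreviation "Om \<equiv> Phi ` D"
abbreviation "Psi \<equiv> inv_into D Phi"

definition "dPhi q = frechet_derivative Phi (at q)"
definition "dPsi p = frechet_derivative Psi (at p)"

definition "tau p = snd (Psi p)"
definition "grad_tau p = (\<Sum>b\<in>Basis. snd (pd Psi b p) *\<^sub>R b)"
definition "hess_tau p c = (\<Sum>b\<in>Basis. snd (pd (pd Psi b) c p) *\<^sub>R b)"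
definition "lap_tau p = (\<Sum>b\<in>Basis. hess_tau p b \<bullet> b)"
abbreviation "nu p \<equiv> sgn (grad_tau p)"

definition "G q = ds_phi D Phi q + real CARD('m) * Hcurv Phi q * phi Phi q"

lemma open_D: "open D"
  by (simp add: open_Times)

lemma Psi_Phi: "q \<in> D \<Longrightarrow> Psi (Phi q) = q"
  using inj_Phi by (simp add: inv_into_f_f)

lemma Psi_in_D: "p \<in> Om \<Longrightarrow> Psi p \<in> D"
  by (rule inv_into_into)

lemma Phi_Psi: "p \<in> Om \<Longrightarrow> Phi (Psi p) = p"
  by (rule f_inv_into_f)

lemma has_derivative_Phi: "q \<in> D \<Longrightarrow> (Phi has_derivative dPhi q) (at q)"
  using C2_Phi unfolding C2_on_def dPhi_def by (auto intro: frechet_derivative_works[THEN iffD1])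

lemma has_derivative_Psi: "p \<in> Om \<Longrightarrow> (Psi has_derivative dPsi p) (at p)"
  using C2_Psi unfolding C2_on_def dPsi_def by (auto intro: frechet_derivative_works[THEN iffD1])

lemma continuous_on_Phi: "continuous_on D Phi"
  by (rule continuous_at_imp_continuous_on) (blast intro: has_derivative_continuous has_derivative_Phi)

lemma linear_dPhi: "q \<in> D \<Longrightarrow> linear (dPhi q)"
  using has_derivative_Phi has_derivative_linear by blast

lemma linear_dPsi: "p \<in> Om \<Longrightarrow> linear (dPsi p)"
  using has_derivative_Psi has_derivative_linear by blast

lemma dPsi_dPhi: assumes "q \<in> D" shows "dPsi (Phi q) (dPhi q v) = v"
proof -
  have "(Psi \<circ> Phi has_derivative (dPsi (Phi q) \<circ> dPhi q)) (at q)"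
    by (rule diff_chain_at[OF has_derivative_Phi[OF assms] has_derivative_Psi]) (use assms in simp)
  then have "(id has_derivative (dPsi (Phi q) \<circ> dPhi q)) (at q)"
    by (rule has_derivative_transform_within_open[OF _ open_D assms]) (simp add: Psi_Phi)
  then have "dPsi (Phi q) \<circ> dPhi q = id"
    using has_derivative_id has_derivative_unique by blast
  then show ?thesis by (metis comp_apply id_apply)
qed

lemma dPhi_dPsi: assumes "q \<in> D" shows "dPhi q (dPsi (Phi q) w) = w"
proof -
  have p: "Phi q \<in> Om" using assms by simp
  have "(Phi \<circ> Psi has_derivative (dPhi q \<circ> dPsi (Phi q))) (at (Phi q))"
    using diff_chain_at[OF has_derivative_Psi[OF p] has_derivative_Phi[OF Psi_in_D[OF p]]]
    by (simp add: Psi_Phi[OF assms])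
  then have "(id has_derivative (dPhi q \<circ> dPsi (Phi q))) (at (Phi q))"
    by (rule has_derivative_transform_within_open[OF _ open_image p]) (simp add: Phi_Psi)
  then have "dPhi q \<circ> dPsi (Phi q) = id"
    using has_derivative_id has_derivative_unique by blast
  then show ?thesis by (metis comp_apply id_apply)
qed

lemma dx_eq_dPhi: "dx Phi i q = dPhi q (axis i 1, 0)"
  by (simp add: dx_def pd_def dPhi_def)

lemma dt_eq_dPhi: "dt Phi q = dPhi q (0, 1)"
  by (simp add: dt_def pd_def dPhi_def)

lemma dPhi_horizontal: assumes "q \<in> D" shows "dPhi q (x, 0) = (\<Sum>j\<in>UNIV. x$j *\<^sub>R dx Phi j q)"
proof -
  have "(x, 0::real) = (\<Sum>j\<in>UNIV. x$j *\<^sub>R (axis j 1, 0))"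
    using basis_expansion[of x] by (simp add: sum_prod scaleR_prod_def scalar_mult_eq_scaleR)
  then show ?thesis
    by (simp only: linear_sum[OF linear_dPhi[OF assms]] linear_scale[OF linear_dPhi[OF assms]] dx_eq_dPhi)
qed

lemma inner_grad_tau: assumes "p \<in> Om" shows "grad_tau p \<bullet> w = snd (dPsi p w)"
proof -
  have "snd (dPsi p w) = (\<Sum>b\<in>Basis. (w \<bullet> b) * snd (dPsi p b))"
    by (simp add: linear_Basis_expansion[OF linear_dPsi[OF assms], of w] snd_sum)
  then show ?thesis
    by (simp add: grad_tau_def pd_def dPsi_def inner_sum_left inner_commute[of w] mult.commute)
qed

lemma inner_grad_tau_dPhi: "q \<in> D \<Longrightarrow> grad_tau (Phi q) \<bullet> dPhi q v = snd v"
  using inner_grad_tau dPsi_dPhi by simp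

lemma grad_tau_nonzero: assumes "p \<in> Om" shows "grad_tau p \<noteq> 0"
  using inner_grad_tau_dPhi[OF Psi_in_D[OF assms], of "(0, 1)"] by (auto simp: Phi_Psi[OF assms])

lemma grad_tau_Phi_nonzero: "q \<in> D \<Longrightarrow> grad_tau (Phi q) \<noteq> 0"
  using grad_tau_nonzero by simp

lemma inner_nvec: "nvec Phi q \<bullet> v = det (\<chi> r c. if c = None then v$r else dx Phi (the c) q $ r)"
proof -
  have "nvec Phi q \<bullet> v = (\<Sum>j\<in>UNIV. v$j * nvec Phi q $ j)"
    by (simp add: inner_vec_def mult.commute)
  also have "\<dots> = (\<Sum>j\<in>UNIV. v$j * det (\<chi> r c. if c = None then (if r = j then 1 else 0)
                                                  else dx Phi (the c) q $ r))"
    by (simp add: nvec_def option.case_eq_if)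
  also have "\<dots> = det (\<chi> r c. if c = None then v$r else dx Phi (the c) q $ r)"
    by (rule det_column_expansion[symmetric])
  finally show ?thesis .
qed

lemma inner_nvec_dx: "nvec Phi q \<bullet> dx Phi i q = 0"
  unfolding inner_nvec
  by (rule det_identical_columns[of None "Some i"]) (auto simp: column_def vec_eq_iff)

lemma inner_nvec_dt: "nvec Phi q \<bullet> dt Phi q = jac_det Phi q"
  unfolding inner_nvec jac_det_def jac_mat_def
  by (rule arg_cong[where f=det]) (simp add: vec_eq_iff split: option.split)

text \<open>Both sides have the same inner products with the columns of the Jacobian, which span.\<close>
lemma nvec_eq: assumes "q \<in> D" shows "nvec Phi q = jac_det Phi q *\<^sub>R grad_tau (Phi q)"
proof -
  define d where "d = nvec Phi q - jac_det Phi q *\<^sub>R grad_tau (Phi q)"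
  have "d \<bullet> dPhi q k = 0" if "k \<in> Basis" for k
    using that
  proof (cases rule: Basis_vec_real_prod_cases)
    case (1 i)
    then show ?thesis using inner_nvec_dx[of q i] inner_grad_tau_dPhi[OF assms, of k]
      by (simp add: d_def dx_eq_dPhi inner_diff_left)
  next
    case 2
    then show ?thesis using inner_nvec_dt[of q] inner_grad_tau_dPhi[OF assms, of k]
      by (simp add: d_def dt_eq_dPhi inner_diff_left)
  qed
  then have "d \<bullet> dPhi q v = 0" for v
    by (simp add: linear_Basis_expansion[OF linear_dPhi[OF assms], of v] inner_sum_right)
  from this[of "dPsi (Phi q) d"] have "d \<bullet> d = 0" by (simp add: dPhi_dPsi[OF assms])
  then show ?thesis by (simp add: d_def)
qed

lemma Nvec_eq: "q \<in> D \<Longrightarrow> Nvec Phi q = nu (Phi q)"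
  using jac_det_pos[of q] by (simp add: Nvec_def nvec_eq sgn_div_norm)

lemma phi_eq: "q \<in> D \<Longrightarrow> phi Phi q = 1 / norm (grad_tau (Phi q))"
  using jac_det_pos[of q] by (simp add: phi_def nvec_eq)

lemma has_derivative_grad_tau: assumes "p \<in> Om" shows "(grad_tau has_derivative hess_tau p) (at p)"
proof -
  have "((\<lambda>p. snd (pd Psi b p) *\<^sub>R b) has_derivative (\<lambda>c. snd (pd (pd Psi b) c p) *\<^sub>R b)) (at p)"
    if "b \<in> Basis" for b
  proof -
    have "(pd Psi b has_derivative (\<lambda>c. pd (pd Psi b) c p)) (at p)"
      using C2_Psi that assms unfolding C2_on_def by (blast intro: has_derivative_pd)
    then show ?thesis
      by (intro has_derivative_scaleR_left has_derivative_snd)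
  qed
  then show ?thesis unfolding grad_tau_def hess_tau_def[abs_def]
    by (intro has_derivative_sum) auto
qed

lemma linear_hess_tau: "p \<in> Om \<Longrightarrow> linear (hess_tau p)"
  using has_derivative_grad_tau has_derivative_linear by blast

lemma continuous_on_grad_tau: "continuous_on Om grad_tau"
  by (rule continuous_at_imp_continuous_on) (blast intro: has_derivative_continuous has_derivative_grad_tau)

lemma inner_hess_tau_Basis: "b \<in> Basis \<Longrightarrow> hess_tau p c \<bullet> b = snd (pd (pd Psi b) c p)"
  by (simp add: hess_tau_def inner_sum_left inner_Basis if_distrib sum.delta cong: if_cong)

lemma continuous_on_lap_tau: "continuous_on Om lap_tau"
proof -
  have "continuous_on Om (\<lambda>p. snd (pd (pd Psi b) b p))" if "b \<in> Basis" for b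
    using C2_Psi that unfolding C2_on_def by (blast intro: continuous_on_snd)
  then show ?thesis
    unfolding lap_tau_def[abs_def] by (intro continuous_on_sum) (simp add: inner_hess_tau_Basis)
qed

lemma has_derivative_tau: assumes "p \<in> Om" shows "(tau has_derivative (\<lambda>w. grad_tau p \<bullet> w)) (at p)"
  using has_derivative_snd[OF has_derivative_Psi[OF assms]]
  by (simp add: tau_def[abs_def] inner_grad_tau[OF assms])

lemma continuous_on_tau: "continuous_on Om tau"
  by (rule continuous_at_imp_continuous_on) (blast intro: has_derivative_continuous has_derivative_tau)

lemma tau_Phi: "q \<in> D \<Longrightarrow> tau (Phi q) = snd q"
  by (simp add: tau_def Psi_Phi)

lemma tau_in_J: "p \<in> Om \<Longrightarrow> tau p \<in> J"
  using Psi_in_D unfolding tau_def by (metis SigmaE snd_conv)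

lemma tau_image: "tau ` Om = J"
proof
  show "J \<subseteq> tau ` Om"
  proof
    fix t assume "t \<in> J"
    then have "(0, t) \<in> D" "tau (Phi (0, t)) = t" by (simp_all add: tau_Phi)
    then show "t \<in> tau ` Om" by (metis image_eqI)
  qed
qed (use tau_in_J in blast)

lemma leaf_eq_tau_level_set: assumes "t \<in> J" shows "Phi ` (UNIV \<times> {t}) = {p \<in> Om. tau p = t}"
proof
  show "{p \<in> Om. tau p = t} \<subseteq> Phi ` (UNIV \<times> {t})"
  proof
    fix p assume "p \<in> {p \<in> Om. tau p = t}"
    then have p: "p \<in> Om" "snd (Psi p) = t" by (simp_all add: tau_def)
    have "p = Phi (Psi p)" using Phi_Psi[OF p(1)] by simp
    also have "Psi p = (fst (Psi p), t)" using p(2) by (metis prod.collapse)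
    finally show "p \<in> Phi ` (UNIV \<times> {t})" by blast
  qed
  show "Phi ` (UNIV \<times> {t}) \<subseteq> {p \<in> Om. tau p = t}"
    using assms by (auto simp: tau_Phi)
qed

definition "D_nu p c =
  (hess_tau p c - (hess_tau p c \<bullet> nu p) *\<^sub>R nu p) /\<^sub>R norm (grad_tau p)"
definition "div_nu p = (\<Sum>b\<in>Basis. D_nu p b \<bullet> b)"

lemma has_derivative_nu: "p \<in> Om \<Longrightarrow> (nu has_derivative D_nu p) (at p)"
  unfolding D_nu_def[abs_def]
  by (rule has_derivative_sgn[OF has_derivative_grad_tau grad_tau_nonzero])

lemma linear_D_nu: "p \<in> Om \<Longrightarrow> linear (D_nu p)"
  using has_derivative_nu has_derivative_linear by blast

lemma inner_grad_tau_D_nu: assumes "p \<in> Om" shows "grad_tau p \<bullet> D_nu p c = 0"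
proof -
  have "nu p \<bullet> nu p = 1"
    using grad_tau_nonzero[OF assms] by (simp add: norm_sgn dot_square_norm)
  then have "nu p \<bullet> D_nu p c = 0"
    by (simp add: D_nu_def inner_diff_right inner_commute)
  moreover have "grad_tau p = norm (grad_tau p) *\<^sub>R nu p"
    using grad_tau_nonzero[OF assms] by (simp add: sgn_div_norm)
  ultimately show ?thesis by (metis inner_scaleR_left mult_zero_right)
qed

lemma lap_tau_split: assumes "p \<in> Om"
  shows "lap_tau p = norm (grad_tau p) * div_nu p + hess_tau p (nu p) \<bullet> nu p"
proof -
  let ?u = "nu p"
  have "norm (grad_tau p) * div_nu p = (\<Sum>b\<in>Basis. (hess_tau p b - (hess_tau p b \<bullet> ?u) *\<^sub>R ?u) \<bullet> b)"
    unfolding div_nu_def D_nu_def sum_distrib_left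
    by (rule sum.cong[OF refl]) (use grad_tau_nonzero[OF assms] in \<open>simp add: mult.assoc[symmetric]\<close>)
  then show ?thesis
    using trace_linear_split[OF linear_hess_tau[OF assms], of ?u] by (simp add: lap_tau_def)
qed

lemma invertible_first_ff: assumes "q \<in> D" shows "invertible (first_ff Phi q)"
proof -
  have "x = 0" if "first_ff Phi q *v x = 0" for x
  proof -
    define y where "y = (\<Sum>j\<in>UNIV. x$j *\<^sub>R dx Phi j q)"
    have "first_ff Phi q *v x = (\<chi> i. dx Phi i q \<bullet> y)"
      by (simp add: first_ff_def matrix_vector_mult_def y_def inner_sum_right vec_eq_iff mult.commute)
    then have "x \<bullet> (first_ff Phi q *v x) = (\<Sum>i\<in>UNIV. x$i * (dx Phi i q \<bullet> y))"
      by (simp add: inner_vec_def)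
    also have "\<dots> = y \<bullet> y"
      by (simp add: inner_sum_left y_def)
    finally have "y = 0" using that by simp
    then have "dPsi (Phi q) (dPhi q (x, 0)) = dPsi (Phi q) 0"
      using dPhi_horizontal[OF assms] y_def by simp
    then show "x = 0"
      using dPsi_dPhi[OF assms] linear_0[OF linear_dPsi] assms by (simp add: zero_prod_def)
  qed
  then show ?thesis
    using matrix_left_invertible_ker invertible_left_inverse by blast
qed

lemma has_derivative_dx: assumes "q \<in> D" shows "(dx Phi l has_derivative (\<lambda>h. pd (dx Phi l) h q)) (at q)"
proof -
  have "pd Phi (axis l 1, 0) differentiable (at q)"
    using C2_Phi assms axis_real_prod_in_Basis unfolding C2_on_def by blast
  then show ?thesis unfolding dx_def[abs_def] by (rule has_derivative_pd)
qed

text \<open>Differentiate the identity \<open>N \<bullet> dx Phi l = 0\<close> along \<open>x\<^sub>i\<close> (Weingarten equation).\<close>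
lemma inner_D_nu_dx: assumes "q \<in> D"
  shows "D_nu (Phi q) (dPhi q (axis i 1, 0)) \<bullet> dx Phi l q = - (second_ff Phi q $ i $ l)"
proof -
  have "((\<lambda>q. nu (Phi q)) has_derivative (D_nu (Phi q) \<circ> dPhi q)) (at q)"
    using diff_chain_at[OF has_derivative_Phi[OF assms] has_derivative_nu] assms by (simp add: comp_def)
  from has_derivative_inner[OF this has_derivative_dx[OF assms]]
  have "((\<lambda>q. nu (Phi q) \<bullet> dx Phi l q) has_derivative
     (\<lambda>h. nu (Phi q) \<bullet> pd (dx Phi l) h q + (D_nu (Phi q) \<circ> dPhi q) h \<bullet> dx Phi l q)) (at q)" .
  moreover have "nu (Phi y) \<bullet> dx Phi l y = 0" if "y \<in> D" for y
    using inner_nvec_dx[of y l] by (simp add: Nvec_eq[OF that, symmetric] Nvec_def)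
  ultimately have "(\<lambda>h. nu (Phi q) \<bullet> pd (dx Phi l) h q + (D_nu (Phi q) \<circ> dPhi q) h \<bullet> dx Phi l q)
      = (\<lambda>_. 0)"
    using has_derivative_eq_0_if_constant_on[OF _ open_D assms] by blast
  then have "nu (Phi q) \<bullet> pd (dx Phi l) (axis i 1, 0) q
      + D_nu (Phi q) (dPhi q (axis i 1, 0)) \<bullet> dx Phi l q = 0"
    by (metis comp_apply)
  then show ?thesis
    by (simp add: second_ff_def Nvec_eq[OF assms] inner_commute)
qed

lemma snd_dPsi_D_nu: assumes "q \<in> D" shows "snd (dPsi (Phi q) (D_nu (Phi q) w)) = 0"
  using inner_grad_tau_D_nu inner_grad_tau assms by simp

lemma D_nu_tangent: assumes "q \<in> D"
  shows "D_nu (Phi q) w = (\<Sum>j\<in>UNIV. fst (dPsi (Phi q) (D_nu (Phi q) w)) $ j *\<^sub>R dx Phi j q)"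
proof -
  have "dPsi (Phi q) (D_nu (Phi q) w) = (fst (dPsi (Phi q) (D_nu (Phi q) w)), 0)"
    using snd_dPsi_D_nu[OF assms] by (metis prod.collapse)
  then have "D_nu (Phi q) w = dPhi q (fst (dPsi (Phi q) (D_nu (Phi q) w)), 0)"
    using dPhi_dPsi[OF assms, of "D_nu (Phi q) w"] by metis
  then show ?thesis by (simp add: dPhi_horizontal[OF assms])
qed

text \<open>\<open>\<beta>\<close> is the matrix of the shape operator \<open>- D_nu\<close> in the coordinates \<open>x\<close>; by the Weingarten
  equation \<open>\<beta> g = h\<close>, so \<open>trace \<beta> = trace (g\<^sup>-\<^sup>1 h)\<close>.\<close>
lemma div_nu_eq_mean_curvature: assumes "q \<in> D" shows "div_nu (Phi q) = - real CARD('m) * Hcurv Phi q"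
proof -
  let ?p = "Phi q" and ?g = "first_ff Phi q" and ?h = "second_ff Phi q"
  define \<beta> where "\<beta> = (\<chi> i j. - fst (dPsi ?p (D_nu ?p (dPhi q (axis i 1, 0)))) $ j)"
  have p: "?p \<in> Om" using assms by simp
  have "(\<beta> ** ?g) $ i $ l = ?h $ i $ l" for i l
  proof -
    have "D_nu ?p (dPhi q (axis i 1, 0)) \<bullet> dx Phi l q = - (\<Sum>j\<in>UNIV. \<beta> $ i $ j * (dx Phi j q \<bullet> dx Phi l q))"
      by (subst D_nu_tangent[OF assms]) (simp add: \<beta>_def inner_sum_left sum_negf)
    then show ?thesis using inner_D_nu_dx[OF assms, of i l]
      by (simp add: matrix_matrix_mult_def first_ff_def)
  qed
  then have "\<beta> = ?h ** matrix_inv ?g"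
    by (metis matrix_inv_right[OF invertible_first_ff[OF assms]] matrix_mul_assoc matrix_mul_rid vec_eq_iff)
  then have trace_\<beta>: "trace \<beta> = trace (matrix_inv ?g ** ?h)" by (metis trace_mul_sym)
  have "div_nu ?p = (\<Sum>b\<in>Basis. (D_nu ?p \<circ> dPhi q) (dPsi ?p b) \<bullet> b)"
    by (simp add: div_nu_def dPhi_dPsi[OF assms])
  also have "\<dots> = (\<Sum>k\<in>Basis. dPsi ?p ((D_nu ?p \<circ> dPhi q) k) \<bullet> k)"
    by (rule trace_linear_comp_commute[OF linear_dPsi[OF p] linear_compose[OF linear_dPhi[OF assms] linear_D_nu[OF p]]])
  also have "\<dots> = - trace \<beta>"
    using snd_dPsi_D_nu[OF assms]
    by (simp add: sum_Basis_vec_real_prod \<beta>_def inner_axis inner_prod_def trace_def sum_negf)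
  finally show ?thesis using trace_\<beta> by (simp add: Hcurv_def)
qed

lemma ds_phi_eq: assumes "q \<in> D"
  shows "ds_phi D Phi q
    = - (hess_tau (Phi q) (nu (Phi q)) \<bullet> nu (Phi q)) / (norm (grad_tau (Phi q)))\<^sup>2"
proof -
  have p: "Phi q \<in> Om" using assms by simp
  have "1 / norm (grad_tau p') = phi Phi (Psi p')" if "p' \<in> Om" for p'
    using phi_eq[OF Psi_in_D[OF that]] Phi_Psi[OF that] by simp
  with has_derivative_inverse_norm[OF has_derivative_grad_tau[OF p] grad_tau_nonzero[OF p]]
  have "((\<lambda>p. phi Phi (Psi p)) has_derivative
      (\<lambda>c. - (hess_tau (Phi q) c \<bullet> nu (Phi q)) / (norm (grad_tau (Phi q)))\<^sup>2)) (at (Phi q))"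
    by (rule has_derivative_transform_within_open[OF _ open_image p])
  then show ?thesis by (simp add: ds_phi_def Nvec_eq[OF assms] pd_eq)
qed

lemma lap_tau_eq_G: assumes "q \<in> D" shows "lap_tau (Phi q) = - (norm (grad_tau (Phi q)))\<^sup>2 * G q"
proof -
  have p: "Phi q \<in> Om" using assms by simp
  show ?thesis
    using grad_tau_nonzero[OF p]
    unfolding lap_tau_split[OF p] G_def ds_phi_eq[OF assms] div_nu_eq_mean_curvature[OF assms] phi_eq[OF assms]
    by (simp add: field_simps power2_eq_square)
qed

lemma has_derivative_comp_tau:
  assumes "p \<in> Om" "\<And>t. t \<in> J \<Longrightarrow> (g has_real_derivative g' t) (at t)"
  shows "((\<lambda>p. g (tau p)) has_derivative (\<lambda>w. g' (tau p) * (grad_tau p \<bullet> w))) (at p)"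
  using diff_chain_at[OF has_derivative_tau[OF assms(1)] assms(2)[OF tau_in_J[OF assms(1)],
        unfolded has_field_derivative_def]]
  by (simp add: comp_def)

context
  fixes f f' f'' :: "real \<Rightarrow> real" and F :: "real^('m option) \<Rightarrow> real"
  assumes f': "\<And>t. t \<in> J \<Longrightarrow> (f has_real_derivative f' t) (at t)"
    and f'': "\<And>t. t \<in> J \<Longrightarrow> (f' has_real_derivative f'' t) (at t)"
    and F_eq: "\<And>p. p \<in> Om \<Longrightarrow> F p = f (tau p)"
begin

lemma has_derivative_F: assumes "p \<in> Om"
  shows "(F has_derivative (\<lambda>w. f' (tau p) * (grad_tau p \<bullet> w))) (at p)"
proof (rule has_derivative_transform_within_open[OF _ open_image assms])
  show "((\<lambda>p. f (tau p)) has_derivative (\<lambda>w. f' (tau p) * (grad_tau p \<bullet> w))) (at p)"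
    by (rule has_derivative_comp_tau[OF assms f'])
  fix x assume "x \<in> Om"
  then show "f (tau x) = F x" using F_eq by simp
qed

lemma has_derivative_pd_F: assumes "p \<in> Om"
  shows "(pd F b has_derivative
           (\<lambda>c. f'' (tau p) * (grad_tau p \<bullet> c) * (grad_tau p \<bullet> b) + f' (tau p) * (hess_tau p c \<bullet> b))) (at p)"
proof -
  have "((\<lambda>p. grad_tau p \<bullet> b) has_derivative (\<lambda>c. hess_tau p c \<bullet> b)) (at p)"
    by (rule bounded_linear.has_derivative[OF bounded_linear_inner_left has_derivative_grad_tau[OF assms]])
  from has_derivative_mult[OF has_derivative_comp_tau[OF assms f''] this]
  have "((\<lambda>p. f' (tau p) * (grad_tau p \<bullet> b)) has_derivative
      (\<lambda>c. f'' (tau p) * (grad_tau p \<bullet> c) * (grad_tau p \<bullet> b) + f' (tau p) * (hess_tau p c \<bullet> b))) (at p)"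
    by (simp add: algebra_simps)
  then show ?thesis
    by (rule has_derivative_transform_within_open[OF _ open_image assms])
      (simp add: pd_eq[OF has_derivative_F])
qed

lemma laplacian_F: assumes "q \<in> D"
  shows "(\<Sum>b\<in>Basis. pd (pd F b) b (Phi q)) = (norm (grad_tau (Phi q)))\<^sup>2 * (f'' (snd q) - f' (snd q) * G q)"
proof -
  let ?g = "grad_tau (Phi q)"
  have "(\<Sum>b\<in>Basis. pd (pd F b) b (Phi q))
      = f'' (snd q) * (\<Sum>b\<in>Basis. (?g \<bullet> b) * (?g \<bullet> b)) + f' (snd q) * lap_tau (Phi q)"
    using assms
    by (simp add: pd_eq[OF has_derivative_pd_F] tau_Phi sum.distrib sum_distrib_left lap_tau_def mult.assoc)
  also have "(\<Sum>b\<in>Basis. (?g \<bullet> b) * (?g \<bullet> b)) = (norm ?g)\<^sup>2"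
    by (simp add: euclidean_inner[symmetric] dot_square_norm)
  finally show ?thesis by (simp add: lap_tau_eq_G[OF assms] algebra_simps)
qed

lemma C2_on_F:
  assumes "continuous_on J f''"
  shows "C2_on Om F"
  unfolding C2_on_def
proof (intro conjI ballI)
  fix p assume "p \<in> Om"
  then show "F differentiable at p" using has_derivative_F by (auto simp: differentiable_def)
next
  fix b p assume "p \<in> Om"
  then show "pd F b differentiable at p" using has_derivative_pd_F unfolding differentiable_def by blast
next
  fix b c :: "real^('m option)" assume b: "b \<in> Basis" and c: "c \<in> Basis"
  have "continuous_on J f'"
    by (rule continuous_at_imp_continuous_on) (use f'' DERIV_isCont in blast)
  then have "continuous_on Om (\<lambda>p. f' (tau p))" "continuous_on Om (\<lambda>p. f'' (tau p))"
    using continuous_on_compose2[OF _ continuous_on_tau] assms tau_in_J by blast+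
  moreover have "continuous_on Om (\<lambda>p. snd (pd (pd Psi b) c p))"
    using C2_Psi b c unfolding C2_on_def by (blast intro: continuous_on_snd)
  ultimately have "continuous_on Om (\<lambda>p. f'' (tau p) * (grad_tau p \<bullet> c) * (grad_tau p \<bullet> b)
      + f' (tau p) * snd (pd (pd Psi b) c p))"
    by (intro continuous_on_add continuous_on_mult continuous_on_inner continuous_on_grad_tau
        continuous_on_const)
  then show "continuous_on Om (pd (pd F b) c)"
    by (rule continuous_on_eq) (simp add: pd_eq[OF has_derivative_pd_F] inner_hess_tau_Basis[OF b])
qed

end

lemma continuous_on_G: "continuous_on D G"
proof -
  have "continuous_on D (\<lambda>q. lap_tau (Phi q))" "continuous_on D (\<lambda>q. grad_tau (Phi q))"
    using continuous_on_compose2[OF _ continuous_on_Phi] continuous_on_lap_tau continuous_on_grad_tau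
    by blast+
  then have "continuous_on D (\<lambda>q. - lap_tau (Phi q) / (norm (grad_tau (Phi q)))\<^sup>2)"
    by (auto intro!: continuous_intros simp: grad_tau_Phi_nonzero)
  then show ?thesis
    by (rule continuous_on_eq) (simp add: lap_tau_eq_G grad_tau_nonzero)
qed

lemma level_sets_comp_tau:
  assumes "inj_on f J"
  shows "level_sets Om (\<lambda>p. f (tau p)) = {Phi ` (UNIV \<times> {t}) | t. t \<in> J}"
proof -
  have leaf: "{p \<in> Om. f (tau p) = f t} = Phi ` (UNIV \<times> {t})" if "t \<in> J" for t
    using that assms tau_in_J by (auto simp: leaf_eq_tau_level_set dest: inj_onD)
  have "(\<lambda>p. f (tau p)) ` Om = f ` J"
    using tau_image by (metis image_image)
  then have "level_sets Om (\<lambda>p. f (tau p)) = (\<lambda>t. {p \<in> Om. f (tau p) = f t}) ` J"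
    by (simp add: level_sets_def Setcompr_eq_image image_image)
  also have "\<dots> = (\<lambda>t. Phi ` (UNIV \<times> {t})) ` J"
    using leaf by (rule image_cong[OF refl])
  finally show ?thesis unfolding Setcompr_eq_image .
qed

lemma eq_comp_tau_if_level_sets:
  assumes "level_sets Om U = {Phi ` (UNIV \<times> {t}) | t. t \<in> J}" and "p \<in> Om"
  shows "U p = U (Phi (0, tau p))"
proof -
  have "{p' \<in> Om. U p' = U p} \<in> level_sets Om U"
    unfolding level_sets_def using assms(2) by blast
  then obtain t where t: "t \<in> J" and level: "{p' \<in> Om. U p' = U p} = Phi ` (UNIV \<times> {t})"
    using assms(1) by auto
  then have "tau p = t"
    using assms(2) leaf_eq_tau_level_set by blast
  moreover have "Phi (0, t) \<in> {p' \<in> Om. U p' = U p}"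
    using level by blast
  ultimately show ?thesis by simp
qed

lemma has_real_derivative_transversal:
  fixes U :: "real^('m option) \<Rightarrow> real"
  assumes "U differentiable at (Phi (0, t))" "t \<in> J"
  shows "((\<lambda>t. U (Phi (0, t))) has_real_derivative pd U (dt Phi (0, t)) (Phi (0, t))) (at t)"
proof -
  have tD: "(0, t) \<in> D" using assms(2) by simp
  have "((\<lambda>t. (0::real^'m, t)) has_derivative (\<lambda>h. (0, h))) (at t)"
    by (intro derivative_eq_intros) auto
  from has_derivative_compose[OF has_derivative_compose[OF this has_derivative_Phi[OF tD]]
      has_derivative_pd[OF assms(1)]]
  have "((\<lambda>t. U (Phi (0, t))) has_derivative (\<lambda>h. pd U (dPhi (0, t) (0, h)) (Phi (0, t)))) (at t)" .
  moreover have "pd U (dPhi (0, t) (0, h)) (Phi (0, t)) = h * pd U (dt Phi (0, t)) (Phi (0, t))" for h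
  proof -
    have "dPhi (0, t) (0, h) = h *\<^sub>R dt Phi (0, t)"
      using linear_scale[OF linear_dPhi[OF tD], of h "(0, 1)"] by (simp add: dt_eq_dPhi)
    then show ?thesis
      using linear_scale[OF has_derivative_linear[OF has_derivative_pd[OF assms(1)]]] by simp
  qed
  ultimately show ?thesis by (simp add: has_field_derivative_def mult_commute_abs)
qed

lemma differentiable_pd_transversal:
  fixes U :: "real^('m option) \<Rightarrow> real"
  assumes U: "C2_on Om U" and t: "t \<in> J"
  shows "(\<lambda>t. pd U (dt Phi (0, t)) (Phi (0, t))) differentiable at t"
proof -
  have tD: "(0, t) \<in> D" using t by simp
  have emb: "(\<lambda>s. (0::real^'m, s)) differentiable at t"
    unfolding differentiable_def by (intro exI derivative_eq_intros) auto
  have "pd Phi (0, 1) differentiable at (0, t)" "Phi differentiable at (0, t)"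
    using C2_Phi tD unfolding C2_on_def by (auto simp: Basis_prod_def)
  then have dt: "(\<lambda>s. dt Phi (0, s)) differentiable at t" and Phi: "(\<lambda>s. Phi (0, s)) differentiable at t"
    unfolding dt_def by (auto intro: differentiable_compose[OF _ emb])
  have "(\<lambda>s. (dt Phi (0, s) \<bullet> b) * pd U b (Phi (0, s))) differentiable at t" if b: "b \<in> Basis" for b
  proof -
    have "pd U b differentiable at (Phi (0, t))"
      using U b tD unfolding C2_on_def by auto
    from differentiable_compose[where g="\<lambda>s. Phi (0, s)", OF this Phi]
    show ?thesis by (intro differentiable_mult differentiable_inner dt differentiable_const)
  qed
  then have "(\<lambda>s. \<Sum>b\<in>Basis. (dt Phi (0, s) \<bullet> b) * pd U b (Phi (0, s))) differentiable at t"
    by (intro differentiable_sum) auto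
  then obtain D' where
    "((\<lambda>s. \<Sum>b\<in>Basis. (dt Phi (0, s) \<bullet> b) * pd U b (Phi (0, s))) has_derivative D') (at t)"
    by (auto simp: differentiable_def)
  then have "((\<lambda>t. pd U (dt Phi (0, t)) (Phi (0, t))) has_derivative D') (at t)"
  proof (rule has_derivative_transform_within_open[of _ _ _ _ J])
    fix s assume "s \<in> J"
    then have "U differentiable at (Phi (0, s))" using U unfolding C2_on_def by auto
    then show "(\<Sum>b\<in>Basis. (dt Phi (0, s) \<bullet> b) * pd U b (Phi (0, s))) = pd U (dt Phi (0, s)) (Phi (0, s))"
      by (simp add: pd_Basis_expansion)
  qed (use t in auto)
  then show ?thesis by (auto simp: differentiable_def)
qed

lemma G_constant_on_leaves_if_harmonic:
  assumes harmonic: "harmonic_on Om U" and noncritical: "\<forall>p\<in>Om. frechet_derivative U (at p) \<noteq> (\<lambda>v. 0)"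
    and level_sets: "level_sets Om U = {Phi ` (UNIV \<times> {t}) | t. t \<in> J}"
  shows "\<forall>t\<in>J. \<forall>x y. G (x, t) = G (y, t)"
proof -
  have C2: "C2_on Om U" using harmonic by (simp add: harmonic_on_def)
  define f where "f t = U (Phi (0, t))" for t
  define f' where "f' t = pd U (dt Phi (0, t)) (Phi (0, t))" for t
  have f': "(f has_real_derivative f' t) (at t)" if "t \<in> J" for t
    unfolding f_def f'_def using C2 that
    by (intro has_real_derivative_transversal) (auto simp: C2_on_def)
  have f'': "(f' has_real_derivative deriv f' t) (at t)" if "t \<in> J" for t
    using differentiable_pd_transversal[OF C2 that] unfolding f'_def
    by (simp add: DERIV_deriv_iff_real_differentiable)
  have U_eq: "U p = f (tau p)" if "p \<in> Om" for p
    using eq_comp_tau_if_level_sets[OF level_sets that] by (simp add: f_def)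
  have "G q = deriv f' (snd q) / f' (snd q)" if q: "q \<in> D" for q
  proof -
    have "(norm (grad_tau (Phi q)))\<^sup>2 * (deriv f' (snd q) - f' (snd q) * G q) = 0"
      using laplacian_F[OF f' f'' U_eq q] harmonic q unfolding harmonic_on_def by auto
    then have "deriv f' (snd q) = f' (snd q) * G q"
      using grad_tau_Phi_nonzero[OF q] by simp
    moreover have "f' (snd q) \<noteq> 0"
    proof
      assume "f' (snd q) = 0"
      moreover have "Phi q \<in> Om" using q by simp
      note frechet_derivative_at[OF has_derivative_F[OF f' f'' U_eq this], symmetric]
      ultimately have "frechet_derivative U (at (Phi q)) = (\<lambda>v. 0)"
        using q by (simp add: tau_Phi)
      then show False using noncritical q by auto
    qed
    ultimately show ?thesis by simp
  qed
  then show ?thesis by auto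
qed

text \<open>Choose \<open>f\<close> with \<open>f' = exp h\<close> and \<open>h' = G\<close> on the leaves, so that \<open>f'' = f' G\<close> and \<open>f\<close> is
  strictly increasing.\<close>
lemma harmonic_if_G_constant_on_leaves:
  assumes G_const: "\<forall>t\<in>J. \<forall>x y. G (x, t) = G (y, t)"
  shows "\<exists>U. harmonic_on Om U \<and> (\<forall>p\<in>Om. frechet_derivative U (at p) \<noteq> (\<lambda>v. 0))
           \<and> level_sets Om U = {Phi ` (UNIV \<times> {t}) | t. t \<in> J}"
proof -
  define g where "g t = G (0, t)" for t
  have J_nonempty: "-eps < eps" using eps_pos by simp
  have continuous_g: "continuous_on J g"
    unfolding g_def by (rule continuous_on_compose2[OF continuous_on_G]) (auto intro!: continuous_intros)
  obtain h where h: "\<And>t. t \<in> J \<Longrightarrow> (h has_real_derivative g t) (at t)"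
    using open_interval_antiderivative[OF J_nonempty continuous_g] by blast
  have "continuous_on J h"
    by (rule continuous_at_imp_continuous_on) (use h DERIV_isCont in blast)
  then have continuous_exp_h: "continuous_on J (\<lambda>t. exp (h t))"
    by (intro continuous_intros)
  obtain f where f': "\<And>t. t \<in> J \<Longrightarrow> (f has_real_derivative exp (h t)) (at t)"
    using open_interval_antiderivative[OF J_nonempty continuous_exp_h] by blast
  have f'': "((\<lambda>t. exp (h t)) has_real_derivative exp (h t) * g t) (at t)" if "t \<in> J" for t
    by (rule DERIV_fun_exp[OF h[OF that]])
  have continuous_f'': "continuous_on J (\<lambda>t. exp (h t) * g t)"
    by (intro continuous_intros continuous_g continuous_exp_h)
  define U where "U p = f (tau p)" for p
  have U_eq: "\<And>p. p \<in> Om \<Longrightarrow> U p = f (tau p)" by (simp add: U_def)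
  have "(\<Sum>b\<in>Basis. pd (pd U b) b p) = 0" if "p \<in> Om" for p
  proof -
    have q: "Psi p \<in> D" using Psi_in_D that by auto
    then have "G (Psi p) = g (snd (Psi p))"
      using G_const unfolding g_def by (cases "Psi p") auto
    then show ?thesis using laplacian_F[OF f' f'' U_eq q] by (simp add: Phi_Psi[OF that])
  qed
  moreover have "frechet_derivative U (at p) \<noteq> (\<lambda>v. 0)" if "p \<in> Om" for p
  proof
    assume "frechet_derivative U (at p) = (\<lambda>v. 0)"
    then have "exp (h (tau p)) * (grad_tau p \<bullet> grad_tau p) = 0"
      using frechet_derivative_at[OF has_derivative_F[OF f' f'' U_eq that]] by metis
    then show False using grad_tau_nonzero[OF that] by simp
  qed
  moreover have "inj_on f J"
  proof (rule DERIV_pos_imp_inj_on_interval)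
    fix t assume "-eps < t" "t < eps"
    then show "\<exists>y. DERIV f t :> y \<and> y > 0"
      using f' by (intro exI[of _ "exp (h t)"] conjI) auto
  qed
  then have "level_sets Om U = {Phi ` (UNIV \<times> {t}) | t. t \<in> J}"
    unfolding U_def by (rule level_sets_comp_tau)
  ultimately show ?thesis
    using C2_on_F[OF f' f'' U_eq continuous_f''] unfolding harmonic_on_def by blast
qed

theorem harmonic_with_leaves_iff_G_constant_on_leaves:
  "(\<exists>U. harmonic_on Om U \<and> (\<forall>p\<in>Om. frechet_derivative U (at p) \<noteq> (\<lambda>v. 0))
        \<and> level_sets Om U = {Phi ` (UNIV \<times> {t}) | t. t \<in> J})
   \<longleftrightarrow> (\<forall>t\<in>J. \<forall>x y. G (x, t) = G (y, t))"
proof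
  assume "\<exists>U. harmonic_on Om U \<and> (\<forall>p\<in>Om. frechet_derivative U (at p) \<noteq> (\<lambda>v. 0))
        \<and> level_sets Om U = {Phi ` (UNIV \<times> {t}) | t. t \<in> J}"
  then show "\<forall>t\<in>J. \<forall>x y. G (x, t) = G (y, t)"
    by (elim exE conjE) (rule G_constant_on_leaves_if_harmonic)
qed (rule harmonic_if_G_constant_on_leaves)

end

theorem theorem3:
  fixes Phi :: "(real^'m::finite) \<times> real \<Rightarrow> real^('m option)" and \<epsilon> :: real
  defines "J \<equiv> {-\<epsilon><..<\<epsilon>}"
  defines "D \<equiv> (UNIV :: (real^'m) set) \<times> J"
  defines "\<Omega> \<equiv> Phi ` D"
  assumes eps: "\<epsilon> > 0"
    and C2: "C2_on D Phi"
    and inj: "inj_on Phi D"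
    and dom: "open \<Omega>" "connected \<Omega>"
    and C2inv: "C2_on \<Omega> (inv_into D Phi)"
    and orient: "\<forall>q\<in>D. jac_det Phi q > 0"
  shows "(\<exists>U. harmonic_on \<Omega> U \<and> (\<forall>p\<in>\<Omega>. frechet_derivative U (at p) \<noteq> (\<lambda>v. 0))
              \<and> level_sets \<Omega> U = {Phi ` (UNIV \<times> {t}) | t. t \<in> J})
         \<longleftrightarrow> (\<forall>t\<in>J. \<forall>x y.
               ds_phi D Phi (x, t) + real CARD('m) * Hcurv Phi (x, t) * phi Phi (x, t)
             = ds_phi D Phi (y, t) + real CARD('m) * Hcurv Phi (y, t) * phi Phi (y, t))"
proof -
  interpret chart: foliation_chart Phi \<epsilon>
    using eps C2 inj dom(1) C2inv orient by unfold_locales (auto simp: J_def D_def \<Omega>_def)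
  show ?thesis
    using chart.harmonic_with_leaves_iff_G_constant_on_leaves
    unfolding chart.G_def \<Omega>_def D_def J_def .
qed

end
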